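(* (i) Let $x\in[0,1]$ admit an infinite OOCF expansion $((a_n,\varepsilon_n))_{n\ge1}$ that is eventually periodic. Then $x$ is either an $\infty$-rational or a quadratic irrational. (ii) If $x\in(0,1)$ is a quadratic irrational, then its OOCF expansion is eventually periodic.
   Context: Rationals are written $p/q$ with $p\in\mathbb Z$, $q\in\mathbb N$, $\gcd(p,q)=1$; $p/q$ is an $\infty$-rational if $p$ and $q$ have different parity (e.g. $0=0/1$). A quadratic irrational is an irrational real root of a quadratic polynomial with integer coefficients. Admissible digits: $D=\{(1,1)\}\cup\{(a,\varepsilon): a\in\mathbb Z,\ a\ge2,\ \varepsilon\in\{-1,1\}\}$. For integers $k\ge1$ put $B(k+1,-1)=\left[\frac{k-1}{k},\frac{2k-1}{2k+1}\right]$ and $B(k,1)=\left[\frac{2k-1}{2k+1},\frac{k}{k+1}\right]$. The OOCF map $T:[0,1]\to[0,1]$ is $T(x)=\frac{kx-(k-1)}{k-(k+1)x}$ for $x\in B(k+1,-1)$, $T(x)=\frac{k-(k+1)x}{kx-(k-1)}$ for $x\in B(k,1)$ ($k\ge1$; the formulas agree at common endpoints), and $T(1)=1$. An infinite OOCF expansion of $x\in[0,1]$ is a sequence $((a_n,\varepsilon_n))_{n\ge1}$ in $D$ with $T^{n-1}(x)\in B(a_n,\varepsilon_n)$ and $T^{n-1}(x)\neq1$ for all $n\ge1$; an irrational $x\in(0,1)$ has exactly one, called its OOCF expansion. *)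

theory Defs
  imports Complex_Main
begin

definition OOCF_digit :: "int \<times> int \<Rightarrow> bool" where
  "OOCF_digit d \<longleftrightarrow> d = (1, 1) \<or> (fst d \<ge> 2 \<and> (snd d = -1 \<or> snd d = 1))"

definition OOCF_B :: "int \<times> int \<Rightarrow> real set" where
  "OOCF_B d = (let a = fst d; e = snd d in
     if e = -1 then (let k = real_of_int (a - 1) in {(k - 1) / k .. (2*k - 1) / (2*k + 1)})
     else (let k = real_of_int a in {(2*k - 1) / (2*k + 1) .. k / (k + 1)}))"

(* For x \<in> [0,1), the integer k \<ge> 1 with
   x \<in> B(k+1,-1) \<union> B(k,1) = [(k-1)/k, k/(k+1)] is floor(1/(1-x))
   (at the common endpoint k/(k+1) both adjacent formulas agree). *)
definition OOCF_T :: "real \<Rightarrow> real" where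
  "OOCF_T x = (if x = 1 then 1 else
     (let k = real_of_int \<lfloor>1 / (1 - x)\<rfloor> in
      if x \<le> (2*k - 1) / (2*k + 1)
      then (k * x - (k - 1)) / (k - (k + 1) * x)
      else (k - (k + 1) * x) / (k * x - (k - 1))))"

(* ((a_n,e_n))_{n\<ge>1} is an infinite OOCF expansion of x (index 0 unused) *)
definition is_OOCF_expansion :: "real \<Rightarrow> (nat \<Rightarrow> int \<times> int) \<Rightarrow> bool" where
  "is_OOCF_expansion x e \<longleftrightarrow>
     (\<forall>n\<ge>1. OOCF_digit (e n) \<and> (OOCF_T ^^ (n - 1)) x \<in> OOCF_B (e n)
             \<and> (OOCF_T ^^ (n - 1)) x \<noteq> 1)"

definition eventually_periodic :: "(nat \<Rightarrow> 'a) \<Rightarrow> bool" where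
  "eventually_periodic e \<longleftrightarrow> (\<exists>N p. p > 0 \<and> (\<forall>n\<ge>N. e (n + p) = e n))"

definition inf_rational :: "real \<Rightarrow> bool" where
  "inf_rational x \<longleftrightarrow> (\<exists>p q :: int. q > 0 \<and> coprime p q \<and> odd (p + q) \<and> x = of_int p / of_int q)"

definition quadratic_irrational :: "real \<Rightarrow> bool" where
  "quadratic_irrational x \<longleftrightarrow> x \<notin> \<rat> \<and>
     (\<exists>a b c :: int. a \<noteq> 0 \<and> of_int a * x^2 + of_int b * x + of_int c = 0)"

end

theory Submission
  imports Defs
begin

text \<open>On each cylinder \<open>B(d)\<close> the OOCF map is a Moebius transformation with an integer matrix of
  determinant \<open>\<plusminus>1\<close> whose denominator lies in \<open>(0,1]\<close>, and in \<open>(0,1/2]\<close> unless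
  \<open>d = (2,-1)\<close>; so \<open>T\<close> does not contract distances on a cylinder, and at least doubles them on
  every cylinder other than \<open>B(2,-1)\<close>.

  (i) If \<open>x = p/q\<close> with \<open>p, q\<close> odd, the orbit consists of fractions odd/odd with strictly
  decreasing denominators, which is absurd; hence a rational \<open>x\<close> is an \<open>\<infinity>\<close>-rational. For irrational
  \<open>x\<close> the digit \<open>(2,-1)\<close> cannot repeat forever, so two points with the same digits coincide. A
  period therefore makes \<open>y = T\<^sup>N x\<close> a fixed point of an integer Moebius map whose denominator at
  \<open>y\<close> is at most \<open>1/2\<close>; its lower left entry is then nonzero, and \<open>y\<close>, hence \<open>x\<close>, is a
  quadratic irrational.

  (ii) Move the Galois conjugate of \<open>x\<close> along with the orbit by the same Moebius maps. The
  discriminant is invariant, the expansion drives the conjugate out of \<open>[0,1]\<close> and then below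
  \<open>0\<close>, after which the coefficients of the quadratic equations are bounded by the discriminant.
  So \<open>T\<^sup>n x = T\<^sup>m x\<close> for some \<open>n < m\<close>, and since an irrational point lies in only one
  cylinder the digits are periodic.\<close>

section \<open>The branches of the OOCF map\<close>

lemma OOCF_digit_cases:
  assumes "OOCF_digit d"
  obtains a where "a \<ge> 2" "d = (a,-1)" | a where "a \<ge> 1" "d = (a,1)"
  using assms unfolding OOCF_digit_def by (cases d) auto

text \<open>On \<open>B(d)\<close> the map \<open>T\<close> is \<open>z \<mapsto> (a z + b)/(c z + d)\<close> for the matrix
  \<open>[[k, 1-k], [-(k+1), k]]\<close> with \<open>k = a - 1\<close> if \<open>d = (a,-1)\<close>, and
  \<open>[[-(k+1), k], [k, 1-k]]\<close> with \<open>k = a\<close> if \<open>d = (a,1)\<close>.\<close>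

definition mob_a :: "int \<times> int \<Rightarrow> int" where
  "mob_a d = (if snd d = -1 then fst d - 1 else - fst d - 1)"
definition mob_b :: "int \<times> int \<Rightarrow> int" where
  "mob_b d = (if snd d = -1 then 2 - fst d else fst d)"
definition mob_c :: "int \<times> int \<Rightarrow> int" where
  "mob_c d = (if snd d = -1 then - fst d else fst d)"
definition mob_d :: "int \<times> int \<Rightarrow> int" where
  "mob_d d = (if snd d = -1 then fst d - 1 else 1 - fst d)"

definition mob_den :: "int \<times> int \<Rightarrow> real \<Rightarrow> real" where
  "mob_den d z = of_int (mob_c d) * z + of_int (mob_d d)"

definition mob :: "int \<times> int \<Rightarrow> real \<Rightarrow> real" where
  "mob d z = (of_int (mob_a d) * z + of_int (mob_b d)) / mob_den d z"

lemma mob_det: "\<bar>mob_a d * mob_d d - mob_b d * mob_c d\<bar> = 1"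
  by (auto simp: mob_a_def mob_b_def mob_c_def mob_d_def algebra_simps)

lemma mob_neg_digit:
  assumes "k = real_of_int a - 1"
  shows "mob (a,-1) z = (k*z - (k-1)) / (k - (k+1)*z)" "mob_den (a,-1) z = k - (k+1)*z"
  unfolding assms by (simp_all add: mob_def mob_den_def mob_a_def mob_b_def mob_c_def mob_d_def algebra_simps)

lemma mob_pos_digit:
  assumes "k = real_of_int a"
  shows "mob (a,1) z = (k - (k+1)*z) / (k*z - (k-1))" "mob_den (a,1) z = k*z - (k-1)"
  using assms by (simp_all add: mob_def mob_den_def mob_a_def mob_b_def mob_c_def mob_d_def algebra_simps)

lemma OOCF_B_neg_digit:
  assumes "k = real_of_int a - 1"
  shows "OOCF_B (a,-1) = {(k-1)/k .. (2*k-1)/(2*k+1)}"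
  using assms by (simp add: OOCF_B_def)

lemma OOCF_B_pos_digit:
  assumes "k = real_of_int a"
  shows "OOCF_B (a,1) = {(2*k-1)/(2*k+1) .. k/(k+1)}"
  using assms by (simp add: OOCF_B_def Let_def)

definition digit_index :: "int \<times> int \<Rightarrow> int" where
  "digit_index d = (if snd d = -1 then 2 * fst d - 2 else 2 * fst d + 1)"

lemma OOCF_B_iff_index:
  assumes "OOCF_digit d"
  shows "z \<in> OOCF_B d \<longleftrightarrow> z < 1 \<and> digit_index d \<le> 2/(1-z) \<and> 2/(1-z) \<le> digit_index d + 1"
  using assms
proof (cases rule: OOCF_digit_cases)
  case (1 a)
  define k where "k = real_of_int a - 1"
  have k: "k \<ge> 1" using 1 k_def by simp
  have "z \<in> OOCF_B d \<longleftrightarrow> k*z \<ge> k-1 \<and> (2*k+1)*z \<le> 2*k-1"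
    using k by (simp add: 1 OOCF_B_neg_digit[OF k_def] field_simps)
  also have "\<dots> \<longleftrightarrow> z < 1 \<and> 2*k \<le> 2/(1-z) \<and> 2/(1-z) \<le> 2*k+1"
  proof (cases "z < 1")
    case False
    then have "(2*k+1)*z \<ge> (2*k+1)*1" using k by (intro mult_left_mono) auto
    then have "\<not> (2*k+1)*z \<le> 2*k-1" by (simp add: algebra_simps)
    with False show ?thesis by simp
  qed (use k in \<open>auto simp: field_simps\<close>)
  finally show ?thesis by (simp add: 1 digit_index_def k_def)
next
  case (2 a)
  define k where "k = real_of_int a"
  have k: "k \<ge> 1" using 2 k_def by simp
  have "z \<in> OOCF_B d \<longleftrightarrow> (2*k+1)*z \<ge> 2*k-1 \<and> (k+1)*z \<le> k"
    using k by (simp add: 2 OOCF_B_pos_digit[OF k_def] field_simps)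
  also have "\<dots> \<longleftrightarrow> z < 1 \<and> 2*k+1 \<le> 2/(1-z) \<and> 2/(1-z) \<le> 2*k+2"
  proof (cases "z < 1")
    case False
    then have "(k+1)*z \<ge> (k+1)*1" using k by (intro mult_left_mono) auto
    then have "\<not> (k+1)*z \<le> k" by (simp add: algebra_simps)
    with False show ?thesis by simp
  qed (use k in \<open>auto simp: field_simps\<close>)
  finally show ?thesis by (simp add: 2 digit_index_def k_def add.commute)
qed

lemma OOCF_B_subset:
  assumes "OOCF_digit d"
  shows "OOCF_B d \<subseteq> {0..<1}"
proof
  fix z assume z: "z \<in> OOCF_B d"
  have "digit_index d \<ge> 2" using assms by (cases rule: OOCF_digit_cases) (auto simp: digit_index_def)
  then have "2 \<le> 2/(1-z)" "z < 1" using z OOCF_B_iff_index[OF assms] by force+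
  then show "z \<in> {0..<1}" by (simp add: field_simps)
qed

lemma neg_branch_den_bounds:
  fixes k z :: real
  assumes "k \<ge> 1" "z \<in> {(k-1)/k .. (2*k-1)/(2*k+1)}"
  shows "0 < k - (k+1)*z" "k * (k - (k+1)*z) \<le> 1"
proof -
  have z1: "k*z \<ge> k - 1" and z2: "(2*k+1)*z \<le> 2*k-1" using assms by (auto simp: field_simps)
  have "(2*k+1)*(k - (k+1)*z) = 2*k*k + k - (k+1)*((2*k+1)*z)" by (simp add: algebra_simps)
  also have "\<dots> \<ge> 2*k*k + k - (k+1)*(2*k-1)" using z2 assms by (intro diff_left_mono mult_left_mono) auto
  finally have "(2*k+1)*(k - (k+1)*z) \<ge> 1" by (simp add: algebra_simps)
  then show "0 < k - (k+1)*z" using assms by (smt (verit) mult_nonneg_nonpos)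
  have "k*(k - (k+1)*z) = k*k - (k+1)*(k*z)" by (simp add: algebra_simps)
  also have "\<dots> \<le> k*k - (k+1)*(k-1)" using z1 assms by (intro diff_left_mono mult_left_mono) auto
  finally show "k*(k - (k+1)*z) \<le> 1" by (simp add: algebra_simps)
qed

lemma pos_branch_den_bounds:
  fixes k z :: real
  assumes "k \<ge> 1" "z \<in> {(2*k-1)/(2*k+1) .. k/(k+1)}"
  shows "0 < k*z - (k-1)" "(k+1) * (k*z - (k-1)) \<le> 1"
proof -
  have z1: "(2*k+1)*z \<ge> 2*k-1" and z2: "(k+1)*z \<le> k" using assms by (auto simp: field_simps)
  have "(2*k+1)*(k*z - (k-1)) = k*((2*k+1)*z) - (2*k+1)*(k-1)" by (simp add: algebra_simps)
  also have "\<dots> \<ge> k*(2*k-1) - (2*k+1)*(k-1)" using z1 assms by (intro diff_right_mono mult_left_mono) auto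
  finally have "(2*k+1)*(k*z - (k-1)) \<ge> 1" by (simp add: algebra_simps)
  then show "0 < k*z - (k-1)" using assms by (smt (verit) mult_nonneg_nonpos)
  have "(k+1)*(k*z - (k-1)) = k*((k+1)*z) - (k+1)*(k-1)" by (simp add: algebra_simps)
  also have "\<dots> \<le> k*k - (k+1)*(k-1)" using z2 assms by (intro diff_right_mono mult_left_mono) auto
  finally show "(k+1)*(k*z - (k-1)) \<le> 1" by (simp add: algebra_simps)
qed

lemma mob_den_bounds:
  assumes d: "OOCF_digit d" and z: "z \<in> OOCF_B d"
  shows "0 < mob_den d z" "mob_den d z \<le> 1" "d \<noteq> (2,-1) \<Longrightarrow> mob_den d z \<le> 1/2"
proof -
  have scale: "c * D \<le> 1" if "0 < D" "c \<le> m" "m * D \<le> 1" for c m D :: real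
    using mult_right_mono[of c m D] that by linarith
  have "0 < mob_den d z \<and> mob_den d z \<le> 1 \<and> (d \<noteq> (2,-1) \<longrightarrow> mob_den d z \<le> 1/2)"
    using d
  proof (cases rule: OOCF_digit_cases)
    case (1 a)
    define k where "k = real_of_int a - 1"
    have k: "k \<ge> 1" using 1 k_def by simp
    have "z \<in> {(k-1)/k .. (2*k-1)/(2*k+1)}" using z 1 OOCF_B_neg_digit[OF k_def] by simp
    note D = neg_branch_den_bounds[OF k this, folded mob_neg_digit(2)[OF k_def]]
    have "k \<ge> 2" if "d \<noteq> (2,-1)" using that 1 k_def by auto
    then show ?thesis using D k scale[of "mob_den d z" 1 k] scale[of "mob_den d z" 2 k] 1 by auto
  next
    case (2 a)
    define k where "k = real_of_int a"
    have k: "k \<ge> 1" using 2 k_def by simp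
    have "z \<in> {(2*k-1)/(2*k+1) .. k/(k+1)}" using z 2 OOCF_B_pos_digit[OF k_def] by simp
    note D = pos_branch_den_bounds[OF k this, folded mob_pos_digit(2)[OF k_def]]
    show ?thesis using D k scale[of "mob_den d z" 1 "k+1"] scale[of "mob_den d z" 2 "k+1"] 2 by auto
  qed
  then show "0 < mob_den d z" "mob_den d z \<le> 1" "d \<noteq> (2,-1) \<Longrightarrow> mob_den d z \<le> 1/2"
    by auto
qed

lemma OOCF_digit_unique:
  assumes d1: "OOCF_digit d1" and d2: "OOCF_digit d2"
    and z: "z \<in> OOCF_B d1" "z \<in> OOCF_B d2" "z \<notin> \<rat>"
  shows "d1 = d2"
proof -
  define u where "u = 2/(1-z)"
  have "z < 1" using z(1) OOCF_B_subset[OF d1] by auto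
  then have "z = 1 - 2/u" by (simp add: u_def field_simps)
  then have "u \<notin> \<rat>" using z(3) by (metis Rats_1 Rats_diff Rats_divide Rats_number_of)
  then have "\<lfloor>u\<rfloor> = j" if "j \<le> u" "u \<le> j + 1" for j :: int
    using that by (metis Rats_of_int floor_eq_iff of_int_add of_int_1 order_le_less)
  then have "digit_index d1 = digit_index d2"
    using z(1,2) OOCF_B_iff_index[OF d1] OOCF_B_iff_index[OF d2] u_def by metis
  then show ?thesis using d1 d2
    by (auto simp: OOCF_digit_def digit_index_def prod_eq_iff) presburger+
qed

lemma OOCF_T_on_level:
  fixes k :: int and z :: real
  assumes k: "k \<ge> 1" and z: "(k-1)/k \<le> z" "z < k/(k+1)"
  shows "OOCF_T z = (if z \<le> (2*k-1)/(2*k+1) then (k*z - (k-1)) / (k - (k+1)*z)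
                    else (k - (k+1)*z) / (k*z - (k-1)))"
proof -
  have "(k+1)*z < k" using z(2) k by (simp add: field_simps)
  then have "z < 1" "k \<le> 1/(1-z)" "1/(1-z) < k+1" using z(1) k by (simp_all add: field_simps)
  then have "\<lfloor>1/(1-z)\<rfloor> = k" by (simp add: floor_eq_iff)
  with \<open>z < 1\<close> show ?thesis by (simp add: OOCF_T_def Let_def)
qed

lemma OOCF_T_eq_mob:
  assumes d: "OOCF_digit d" and z: "z \<in> OOCF_B d"
  shows "OOCF_T z = mob d z"
  using d
proof (cases rule: OOCF_digit_cases)
  case (1 a)
  define k where "k = a - 1"
  have k: "k \<ge> 1" using 1 k_def by simp
  have kr: "real_of_int a - 1 = real_of_int k" using k_def by simp
  have zk: "(k-1)/k \<le> z" "z \<le> (2*k-1)/(2*k+1)" using z 1 OOCF_B_neg_digit[OF kr[symmetric]] by auto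
  moreover have "(2*k-1)/(2*k+1) < k/(k+1)" using k by (simp add: field_simps)
  ultimately show ?thesis using OOCF_T_on_level[OF k] 1 mob_neg_digit(1)[OF kr[symmetric]] by simp
next
  case (2 a)
  define k where "k = real_of_int a"
  have a: "a \<ge> 1" and da: "d = (a,1)" by fact+
  have zk: "(2*k-1)/(2*k+1) \<le> z" "z \<le> k/(k+1)" using z da OOCF_B_pos_digit[OF k_def] by auto
  have den: "0 < k*z - (k-1)" using pos_branch_den_bounds[of k z] a zk k_def by simp
  have mob_z: "mob d z = (k - (k+1)*z) / (k*z - (k-1))" using da mob_pos_digit(1)[OF k_def] by simp
  have "(k-1)/k \<le> (2*k-1)/(2*k+1)" "(2*k-1)/(2*k+1) < k/(k+1)" using a k_def by (simp_all add: field_simps)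
  with zk have lvl: "(k-1)/k \<le> z" by linarith
  consider "(2*k-1)/(2*k+1) < z" "z < k/(k+1)" | "z = (2*k-1)/(2*k+1)" | "z = k/(k+1)"
    using zk by linarith
  then show ?thesis
  proof cases
    case 1
    then show ?thesis using OOCF_T_on_level[of a z] a lvl mob_z k_def by simp
  next
    case 2
    then have "z < k/(k+1)" "z \<le> (2*k-1)/(2*k+1)" using \<open>(2*k-1)/(2*k+1) < k/(k+1)\<close> by simp_all
    then have "OOCF_T z = (k*z - (k-1)) / (k - (k+1)*z)" using OOCF_T_on_level[of a z] a lvl k_def by simp
    moreover have "k - (k+1)*z = k*z - (k-1)" using 2 a k_def by (simp add: field_simps)
    ultimately show ?thesis using den mob_z by simp
  next
    case 3
    moreover have "z < 1" unfolding 3 k_def using a by (simp add: divide_less_eq)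
    ultimately show ?thesis using OOCF_T_on_level[of "a+1" z] a mob_z k_def by (simp add: field_simps)
  qed
qed

lemma neg_branch_preimage:
  fixes k z w :: real
  assumes k: "k \<ge> 1" and D: "k - (k+1)*z \<noteq> 0"
    and w: "w = (k*z - (k-1)) / (k - (k+1)*z)" "0 \<le> w" "w \<le> 1"
  shows "z \<in> {(k-1)/k .. (2*k-1)/(2*k+1)}"
proof -
  define P where "P = k + (k+1)*w"
  have P: "P > 0" using k w(2) by (simp add: P_def add_pos_nonneg)
  have zP: "z * P = k*w + k - 1" using w(1) D by (simp add: P_def field_simps)
  have "(k*z - (k-1)) * P = k*(z*P) - (k-1)*P" "((2*k-1) - (2*k+1)*z) * P = (2*k-1)*P - (2*k+1)*(z*P)"
    by (simp_all add: algebra_simps)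
  then have "(k*z - (k-1)) * P = w" "((2*k-1) - (2*k+1)*z) * P = 1 - w"
    unfolding zP by (simp_all add: P_def algebra_simps)
  then have "k*z - (k-1) \<ge> 0" "(2*k-1) - (2*k+1)*z \<ge> 0"
    using P w by (metis diff_ge_0_iff_ge zero_le_mult_iff not_less)+
  then show ?thesis using k by (simp add: field_simps)
qed

lemma pos_branch_preimage:
  fixes k z w :: real
  assumes k: "k \<ge> 1" and D: "k*z - (k-1) \<noteq> 0"
    and w: "w = (k - (k+1)*z) / (k*z - (k-1))" "0 \<le> w" "w \<le> 1"
  shows "z \<in> {(2*k-1)/(2*k+1) .. k/(k+1)}"
proof -
  define Q where "Q = k*w + k + 1"
  have "0 \<le> k*w" using k w(2) by simp
  then have Q: "Q > 0" using k by (simp add: Q_def)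
  have zQ: "z * Q = k + (k-1)*w" using w(1) D by (simp add: Q_def field_simps)
  have "((2*k+1)*z - (2*k-1)) * Q = (2*k+1)*(z*Q) - (2*k-1)*Q" "(k - (k+1)*z) * Q = k*Q - (k+1)*(z*Q)"
    by (simp_all add: algebra_simps)
  then have "((2*k+1)*z - (2*k-1)) * Q = 1 - w" "(k - (k+1)*z) * Q = w"
    unfolding zQ by (simp_all add: Q_def algebra_simps)
  then have "(2*k+1)*z - (2*k-1) \<ge> 0" "k - (k+1)*z \<ge> 0"
    using Q w by (metis diff_ge_0_iff_ge zero_le_mult_iff not_less)+
  then show ?thesis using k by (simp add: field_simps)
qed

lemma OOCF_B_if_mob_in_unit:
  assumes d: "OOCF_digit d" and D: "mob_den d z \<noteq> 0" and w: "mob d z \<in> {0..1}"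
  shows "z \<in> OOCF_B d"
  using d
proof (cases rule: OOCF_digit_cases)
  case (1 a)
  define k where "k = real_of_int a - 1"
  show ?thesis using neg_branch_preimage[of k z "mob d z"] 1 D w
    by (simp add: k_def mob_neg_digit OOCF_B_neg_digit)
next
  case (2 a)
  define k where "k = real_of_int a"
  show ?thesis using pos_branch_preimage[of k z "mob d z"] 2 D w
    by (simp add: k_def mob_pos_digit OOCF_B_pos_digit)
qed

lemma branch_sign_outside_unit:
  fixes k z :: real
  assumes "k \<ge> 1" "z < 0 \<or> z > 1"
  shows "((k+1)*z - k) * (k*z - (k-1)) > 0"
proof (cases "z < 0")
  case True
  then have "(k+1)*z < 0" "k*z < 0" using assms(1) by (simp_all add: mult_pos_neg)
  then show ?thesis using assms(1) by (simp add: mult_neg_neg)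
next
  case False
  then have "(k+1)*z > (k+1)*1" "k*z \<ge> k*1" using assms by (intro mult_strict_left_mono mult_left_mono; simp)+
  then show ?thesis by simp
qed

lemma mob_neg_outside_unit:
  assumes d: "OOCF_digit d" and z: "z < 0 \<or> z > 1"
  shows "mob d z < 0"
  using d
proof (cases rule: OOCF_digit_cases)
  case (1 a)
  define k where "k = real_of_int a - 1"
  have "k \<ge> 1" using 1 k_def by simp
  moreover have "(k*z - (k-1)) * (k - (k+1)*z) = - (((k+1)*z - k) * (k*z - (k-1)))" by algebra
  ultimately have "(k*z - (k-1)) * (k - (k+1)*z) < 0" using branch_sign_outside_unit[of k z] z by simp
  then show ?thesis using 1 mob_neg_digit[OF k_def] by (simp add: divide_less_0_iff mult_less_0_iff)
next
  case (2 a)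
  define k where "k = real_of_int a"
  have "k \<ge> 1" using 2 k_def by simp
  moreover have "(k - (k+1)*z) * (k*z - (k-1)) = - (((k+1)*z - k) * (k*z - (k-1)))" by algebra
  ultimately have "(k - (k+1)*z) * (k*z - (k-1)) < 0" using branch_sign_outside_unit[of k z] z by simp
  then show ?thesis using 2 mob_pos_digit[OF k_def] by (simp add: divide_less_0_iff mult_less_0_iff)
qed

lemma mob_diff:
  assumes "mob_den d u \<noteq> 0" "mob_den d v \<noteq> 0"
  shows "\<bar>mob d u - mob d v\<bar> = \<bar>u - v\<bar> / (\<bar>mob_den d u\<bar> * \<bar>mob_den d v\<bar>)"
proof -
  have "mob d u - mob d v = of_int (mob_a d * mob_d d - mob_b d * mob_c d) * (u - v) / (mob_den d u * mob_den d v)"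
    using assms unfolding mob_def mob_den_def by (simp add: field_simps)
  moreover have "\<bar>real_of_int (mob_a d * mob_d d - mob_b d * mob_c d)\<bar> = 1"
    using mob_det[of d] by (metis of_int_abs of_int_1)
  ultimately show ?thesis by (simp add: abs_mult abs_divide)
qed

lemma mob_expanding:
  assumes d: "OOCF_digit d" and u: "u \<in> OOCF_B d" and v: "v \<in> OOCF_B d"
  shows "\<bar>u - v\<bar> \<le> \<bar>mob d u - mob d v\<bar>"
    and "d \<noteq> (2,-1) \<Longrightarrow> 2 * \<bar>u - v\<bar> \<le> \<bar>mob d u - mob d v\<bar>"
proof -
  note Du = mob_den_bounds[OF d u] and Dv = mob_den_bounds[OF d v]
  define P where "P = mob_den d u * mob_den d v"
  have P: "0 < P" "P \<le> 1" using Du Dv by (simp_all add: P_def mult_le_one)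
  have eq: "\<bar>mob d u - mob d v\<bar> = \<bar>u - v\<bar> / P"
    using mob_diff[of d u v] Du(1) Dv(1) by (simp add: P_def)
  have "\<bar>u - v\<bar> * P \<le> \<bar>u - v\<bar>" using P by (simp add: mult_left_le)
  then show "\<bar>u - v\<bar> \<le> \<bar>mob d u - mob d v\<bar>" using eq P by (simp add: le_divide_eq)
  assume "d \<noteq> (2,-1)"
  then have "P \<le> 1/2 * 1" unfolding P_def using Du Dv by (intro mult_mono) auto
  then have "2 * \<bar>u - v\<bar> * P \<le> \<bar>u - v\<bar>" using mult_left_mono[of P "1/2" "\<bar>u - v\<bar>"] by simp
  then show "2 * \<bar>u - v\<bar> \<le> \<bar>mob d u - mob d v\<bar>" using eq P by (simp add: le_divide_eq)
qed

lemma mob_den_eq_0_imp_Rats: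
  assumes "OOCF_digit d" "mob_den d z = 0"
  shows "z \<in> \<rat>"
proof -
  have "mob_c d \<noteq> 0" using assms(1) by (cases rule: OOCF_digit_cases) (auto simp: mob_c_def)
  then have "z = - of_int (mob_d d) / of_int (mob_c d)" using assms(2) by (simp add: mob_den_def field_simps)
  then show ?thesis by simp
qed

lemma Rats_if_mob_Rats:
  assumes "mob_den d z \<noteq> 0" "mob d z \<in> \<rat>"
  shows "z \<in> \<rat>"
proof (rule ccontr)
  assume z: "z \<notin> \<rat>"
  define w where "w = mob d z"
  have "w * mob_den d z = of_int (mob_a d) * z + of_int (mob_b d)" using assms(1) by (simp add: w_def mob_def)
  then have eq: "z * (w * of_int (mob_c d) - of_int (mob_a d)) = of_int (mob_b d) - w * of_int (mob_d d)"
    by (simp add: mob_den_def algebra_simps)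
  have "w \<in> \<rat>" using assms(2) w_def by simp
  then have "w * of_int (mob_c d) - of_int (mob_a d) = 0"
    using eq z by (metis Rats_diff Rats_divide Rats_mult Rats_of_int nonzero_mult_div_cancel_right)
  then have a: "of_int (mob_a d) = w * of_int (mob_c d)" by simp
  with eq have b: "of_int (mob_b d) = w * of_int (mob_d d)" by simp
  have "of_int (mob_a d * mob_d d - mob_b d * mob_c d) = (0::real)"
    unfolding of_int_diff of_int_mult a b by simp
  then show False using mob_det[of d] by (metis abs_0 of_int_eq_0_iff zero_neq_one)
qed

lemma quadratic_irrational_if_mobius_image:
  fixes al be ga de A B C :: int and z :: real
  assumes dn: "of_int ga * z + of_int de \<noteq> 0" and det: "al*de - be*ga \<noteq> 0"
    and qi: "quadratic_irrational ((of_int al * z + of_int be) / (of_int ga * z + of_int de))"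
    and z: "z \<notin> \<rat>"
  shows "quadratic_irrational z"
proof -
  define w where "w = (of_int al * z + of_int be) / (of_int ga * z + of_int de)"
  obtain A B C :: int where A: "A \<noteq> 0" and eqw: "of_int A * w^2 + of_int B * w + of_int C = 0"
    using qi unfolding quadratic_irrational_def w_def by blast
  define a' where "a' = A*al^2 + B*al*ga + C*ga^2"
  define b' where "b' = 2*A*al*be + B*(al*de+be*ga) + 2*C*ga*de"
  define c' where "c' = A*be^2 + B*be*de + C*de^2"
  have wd: "w * (of_int ga * z + of_int de) = of_int al * z + of_int be" using dn by (simp add: w_def)
  have "of_int a' * z^2 + of_int b' * z + of_int c' =
        of_int A * (w * (of_int ga * z + of_int de))^2
        + of_int B * (w * (of_int ga * z + of_int de)) * (of_int ga * z + of_int de)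
        + of_int C * (of_int ga * z + of_int de)^2"
    unfolding wd a'_def b'_def c'_def by (simp add: algebra_simps power2_eq_square)
  also have "\<dots> = (of_int ga * z + of_int de)^2 * (of_int A * w^2 + of_int B * w + of_int C)"
    by (simp add: algebra_simps power2_eq_square)
  finally have eqz: "of_int a' * z^2 + of_int b' * z + of_int c' = 0" using eqw by simp
  have "a' \<noteq> 0"
  proof
    assume a': "a' = 0"
    have "b' \<noteq> 0"
    proof
      assume "b' = 0"
      then have "c' = 0" using eqz a' by simp
      moreover have "a'*de^2 - b'*ga*de + c'*ga^2 = A*(al*de - be*ga)^2"
        unfolding a'_def b'_def c'_def by (simp add: algebra_simps power2_eq_square)
      ultimately show False using a' \<open>b' = 0\<close> A det by simp
    qed
    then have "z = - of_int c' / of_int b'" using eqz a' by (simp add: field_simps)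
    then show False using z by simp
  qed
  then show ?thesis using eqz z unfolding quadratic_irrational_def by blast
qed

lemma quadratic_irrational_if_mob:
  assumes "mob_den d z \<noteq> 0" "quadratic_irrational (mob d z)"
  shows "quadratic_irrational z"
proof (rule quadratic_irrational_if_mobius_image)
  show "mob_a d * mob_d d - mob_b d * mob_c d \<noteq> 0" using mob_det[of d] by auto
  show "z \<notin> \<rat>" using assms(2) by (auto simp: quadratic_irrational_def mob_def mob_den_def)
qed (use assms in \<open>simp_all add: mob_def mob_den_def\<close>)

lemma is_OOCF_expansionD:
  assumes "is_OOCF_expansion x e"
  shows "OOCF_digit (e (Suc n))" "(OOCF_T ^^ n) x \<in> OOCF_B (e (Suc n))"
  using assms unfolding is_OOCF_expansion_def by (metis diff_Suc_1 le_add1 plus_1_eq_Suc)+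

lemma OOCF_T_funpow_Suc:
  assumes "is_OOCF_expansion x e"
  shows "(OOCF_T ^^ Suc n) x = mob (e (Suc n)) ((OOCF_T ^^ n) x)"
  using OOCF_T_eq_mob[OF is_OOCF_expansionD[OF assms]] by simp

lemma OOCF_orbit_den_pos:
  assumes "is_OOCF_expansion x e"
  shows "0 < mob_den (e (Suc n)) ((OOCF_T ^^ n) x)"
  using mob_den_bounds(1)[OF is_OOCF_expansionD[OF assms]] .

lemma OOCF_orbit_irrational:
  assumes ex: "is_OOCF_expansion x e" and x: "x \<notin> \<rat>"
  shows "(OOCF_T ^^ n) x \<notin> \<rat>"
proof (induction n)
  case (Suc n)
  then show ?case
    using Rats_if_mob_Rats OOCF_orbit_den_pos[OF ex, of n] OOCF_T_funpow_Suc[OF ex, of n]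
    by (metis less_irrefl)
qed (use x in simp)

lemma OOCF_orbit_pos:
  assumes ex: "is_OOCF_expansion x e" and x: "x \<notin> \<rat>"
  shows "(OOCF_T ^^ n) x > 0"
proof -
  have "(OOCF_T ^^ n) x \<noteq> 0" using OOCF_orbit_irrational[OF assms] by (metis Rats_0)
  moreover have "(OOCF_T ^^ n) x \<in> {0..<1}"
    using OOCF_B_subset is_OOCF_expansionD[OF ex, of n] by blast
  ultimately show ?thesis by simp
qed

text \<open>On the cylinder of the digit \<open>(2,-1)\<close> the map is \<open>z \<mapsto> z/(1-2z)\<close>, i.e. \<open>1/z\<close> drops by 2.\<close>

lemma OOCF_digits_not_eventually_2_neg:
  assumes ex: "is_OOCF_expansion x e" and x: "x \<notin> \<rat>"
  shows "\<exists>n\<ge>M. e (Suc n) \<noteq> (2,-1)"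
proof (rule ccontr)
  assume "\<not> ?thesis"
  then have digit: "e (Suc (M + j)) = (2,-1)" for j by auto
  define z where "z j = (OOCF_T ^^ (M + j)) x" for j
  have pos: "z j > 0" for j using OOCF_orbit_pos[OF assms] z_def by simp
  have step: "1 / z (Suc j) = 1 / z j - 2" for j
  proof -
    have "0 < 1 - 2 * z j"
      using OOCF_orbit_den_pos[OF ex, of "M+j"] digit[of j] by (simp add: z_def mob_neg_digit)
    moreover have "z (Suc j) = z j / (1 - 2 * z j)"
      using OOCF_T_funpow_Suc[OF ex, of "M+j"] digit[of j] by (simp add: z_def mob_neg_digit)
    ultimately have "1 / z (Suc j) = (1 - 2 * z j) / z j" by simp
    also have "\<dots> = 1 / z j - 2" using pos[of j] by (simp add: diff_divide_distrib)
    finally show ?thesis .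
  qed
  have inv: "1 / z j = 1 / z 0 - 2 * real j" for j
  proof (induction j)
    case (Suc j) then show ?case using step[of j] by simp
  qed simp
  obtain j :: nat where "1 / z 0 < real j" using reals_Archimedean2 by blast
  then have "1 / z j < 0" using inv[of j] by linarith
  then show False using pos[of j] by simp
qed

section \<open>Rational points\<close>

lemma odd_fraction_mob:
  assumes d: "OOCF_digit d" and z: "z \<in> OOCF_B d" "z > 0"
    and zq: "z = of_int p / of_int q" and odd: "odd p" "odd q" and q: "q > 0"
  obtains P Q where "odd P" "odd Q" "0 < Q" "Q < q" "mob d z = of_int P / of_int Q"
proof
  define P where "P = mob_a d * p + mob_b d * q"
  define Q where "Q = mob_c d * p + mob_d d * q"
  have QQ: "real_of_int Q = of_int q * mob_den d z"
    and PP: "real_of_int P = of_int q * (of_int (mob_a d) * z + of_int (mob_b d))"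
    using q by (simp_all add: P_def Q_def mob_den_def zq field_simps)
  have den: "0 < mob_den d z" "mob_den d z < 1"
  proof -
    show "0 < mob_den d z" using mob_den_bounds(1)[OF d z(1)] .
    show "mob_den d z < 1"
    proof (cases "d = (2,-1)")
      case True then show ?thesis using z(2) by (simp add: mob_den_def mob_c_def mob_d_def)
    qed (use mob_den_bounds(3)[OF d z(1)] in simp)
  qed
  have "0 < real_of_int Q" "real_of_int Q < of_int q * 1"
    unfolding QQ using den q by (simp_all add: mult_strict_left_mono)
  then show "0 < Q" "Q < q" by simp_all
  show "mob d z = of_int P / of_int Q" using PP QQ den q by (simp add: mob_def)
  show "odd P" "odd Q" using d odd
    by (cases rule: OOCF_digit_cases; simp add: P_def Q_def mob_a_def mob_b_def mob_c_def mob_d_def)+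
qed

lemma no_expansion_of_odd_fraction:
  assumes ex: "is_OOCF_expansion x e" and x: "x = of_int p / of_int q"
    and odd: "odd p" "odd q" and q: "q > 0"
  shows False
proof -
  have "\<exists>P Q. odd P \<and> odd Q \<and> 0 < Q \<and> Q + int n \<le> q \<and> (OOCF_T ^^ n) x = of_int P / of_int Q" for n
  proof (induction n)
    case 0 then show ?case using x odd q by auto
  next
    case (Suc n)
    then obtain P Q where PQ: "odd P" "odd Q" "0 < Q" "Q + int n \<le> q" "(OOCF_T ^^ n) x = of_int P / of_int Q"
      by blast
    note D = is_OOCF_expansionD[OF ex, of n]
    have "(OOCF_T ^^ n) x \<noteq> 0" using PQ by (auto simp: odd_pos)
    then have "(OOCF_T ^^ n) x > 0" using OOCF_B_subset[OF D(1)] D(2) by force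
    then obtain P' Q' where "odd P'" "odd Q'" "0 < Q'" "Q' < Q"
      "mob (e (Suc n)) ((OOCF_T ^^ n) x) = of_int P' / of_int Q'"
      using odd_fraction_mob[OF D] PQ by metis
    then show ?case using OOCF_T_funpow_Suc[OF ex, of n] PQ(4) by (intro exI[of _ P'] exI[of _ Q']) auto
  qed
  from this[of "nat q"] q show False by auto
qed

lemma inf_rational_if_expansion:
  assumes ex: "is_OOCF_expansion x e" and x: "x \<in> \<rat>"
  shows "inf_rational x"
proof -
  obtain p q where pq: "q > 0" "coprime p q" "x = of_int p / of_int q" using Rats_cases'[OF x] by blast
  have "odd p \<or> odd q" using pq(2) by (metis coprime_common_divisor dvd_refl even_abs_add_iff odd_one)
  then have "odd (p + q)" using no_expansion_of_odd_fraction[OF ex pq(3) _ _ pq(1)] by auto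
  then show ?thesis using pq unfolding inf_rational_def by blast
qed

section \<open>Eventually periodic expansions\<close>

lemma bounded_doubling_seq_zero:
  fixes g :: "nat \<Rightarrow> real"
  assumes mono: "\<And>n. g n \<le> g (Suc n)" and bound: "\<And>n. g n \<le> 1"
    and double: "\<And>n. P n \<Longrightarrow> 2 * g n \<le> g (Suc n)" and often: "\<And>M. \<exists>n\<ge>M. P n"
  shows "g 0 \<le> 0"
proof -
  have "\<exists>n. 2^c * g 0 \<le> g n" for c
  proof (induction c)
    case (Suc c)
    then obtain n where n: "2^c * g 0 \<le> g n" by blast
    obtain m where m: "m \<ge> n" "P m" using often by blast
    have "g n \<le> g m" using lift_Suc_mono_le[of g, OF mono m(1)] .
    then have "2^Suc c * g 0 \<le> g (Suc m)" using n double[OF m(2)] by simp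
    then show ?case by blast
  qed auto
  then have "2^c * g 0 \<le> 1" for c using bound order_trans by blast
  then show "g 0 \<le> 0" using real_arch_pow[of 2 "1 / g 0"] by (smt (verit) divide_less_eq)
qed

lemma mob_orbits_coincide:
  fixes u v :: "nat \<Rightarrow> real"
  assumes digit: "\<And>n. OOCF_digit (d n)" and B: "\<And>n. u n \<in> OOCF_B (d n)" "\<And>n. v n \<in> OOCF_B (d n)"
    and orbit: "\<And>n. u (Suc n) = mob (d n) (u n)" "\<And>n. v (Suc n) = mob (d n) (v n)"
    and often: "\<And>M. \<exists>n\<ge>M. d n \<noteq> (2,-1)"
  shows "u 0 = v 0"
proof -
  have "\<bar>u 0 - v 0\<bar> \<le> 0"
  proof (rule bounded_doubling_seq_zero[where P = "\<lambda>n. d n \<noteq> (2,-1)"])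
    fix n
    show "\<bar>u n - v n\<bar> \<le> \<bar>u (Suc n) - v (Suc n)\<bar>"
      using mob_expanding(1)[OF digit B(1,2)] orbit by simp
    show "d n \<noteq> (2,-1) \<Longrightarrow> 2 * \<bar>u n - v n\<bar> \<le> \<bar>u (Suc n) - v (Suc n)\<bar>"
      using mob_expanding(2)[OF digit B(1,2)] orbit by simp
    have "u n \<in> {0..<1}" "v n \<in> {0..<1}" using OOCF_B_subset[OF digit] B by blast+
    then show "\<bar>u n - v n\<bar> \<le> 1" by auto
  qed (use often in blast)
  then show ?thesis by simp
qed

lemma mob_iterate_fraction:
  assumes orbit: "\<And>i. i < n \<Longrightarrow> u (Suc i) = mob (d i) (u i)"
    and den: "\<And>i. i < n \<Longrightarrow> mob_den (d i) (u i) \<noteq> 0"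
  shows "\<exists>a b c d' :: int. u n * (of_int c * u 0 + of_int d') = of_int a * u 0 + of_int b
           \<and> of_int c * u 0 + of_int d' = (\<Prod>i<n. mob_den (d i) (u i))"
  using assms
proof (induction n)
  case 0
  show ?case by (rule exI[of _ 1], rule exI[of _ 0], rule exI[of _ 0], rule exI[of _ 1]) simp
next
  case (Suc n)
  then obtain a b c d' :: int where IH: "u n * (of_int c * u 0 + of_int d') = of_int a * u 0 + of_int b"
    "of_int c * u 0 + of_int d' = (\<Prod>i<n. mob_den (d i) (u i))" using Suc.IH Suc.prems by (meson less_SucI)
  define M where "M = of_int c * u 0 + of_int d'"
  have uM: "of_int a * u 0 + of_int b = u n * M" using IH(1) by (simp add: M_def)
  define c1 d1 a1 b1 where "c1 = mob_c (d n) * a + mob_d (d n) * c" "d1 = mob_c (d n) * b + mob_d (d n) * d'"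
    "a1 = mob_a (d n) * a + mob_b (d n) * c" "b1 = mob_a (d n) * b + mob_b (d n) * d'"
  have "of_int c1 * u 0 + of_int d1 = of_int (mob_c (d n)) * (of_int a * u 0 + of_int b) + of_int (mob_d (d n)) * M"
    by (simp add: c1_d1_a1_b1_def M_def algebra_simps)
  then have e1: "of_int c1 * u 0 + of_int d1 = M * mob_den (d n) (u n)"
    unfolding uM by (simp add: mob_den_def algebra_simps)
  have "of_int a1 * u 0 + of_int b1 = of_int (mob_a (d n)) * (of_int a * u 0 + of_int b) + of_int (mob_b (d n)) * M"
    by (simp add: c1_d1_a1_b1_def M_def algebra_simps)
  then have e2: "of_int a1 * u 0 + of_int b1 = M * (of_int (mob_a (d n)) * u n + of_int (mob_b (d n)))"
    unfolding uM by (simp add: algebra_simps)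
  have "u (Suc n) * (of_int c1 * u 0 + of_int d1) = of_int a1 * u 0 + of_int b1"
    unfolding e1 e2 Suc.prems(1)[OF lessI] using Suc.prems(2)[OF lessI] by (simp add: mob_def)
  moreover have "of_int c1 * u 0 + of_int d1 = (\<Prod>i<Suc n. mob_den (d i) (u i))"
    using e1 IH(2) by (simp add: M_def)
  ultimately show ?case by blast
qed

lemma prod_le_half:
  fixes f :: "'a \<Rightarrow> real"
  assumes "finite A" "i \<in> A" "\<And>j. j \<in> A \<Longrightarrow> 0 \<le> f j \<and> f j \<le> 1" "f i \<le> 1/2"
  shows "prod f A \<le> 1/2"
proof -
  have "prod f A = f i * prod f (A - {i})" using assms(1,2) by (simp add: prod.remove)
  also have "\<dots> \<le> 1/2 * 1" using assms by (intro mult_mono prod_le_1) (auto intro: prod_nonneg)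
  finally show ?thesis by simp
qed

lemma quadratic_irrational_if_fixed_by_fraction:
  fixes a b c d :: int
  assumes y: "y \<notin> \<rat>" and fixed: "y * (of_int c * y + of_int d) = of_int a * y + of_int b"
    and den: "0 < of_int c * y + of_int d" "of_int c * y + of_int d \<le> 1/2"
  shows "quadratic_irrational y"
proof -
  have "c \<noteq> 0"
  proof
    assume "c = 0"
    then have "0 < d" "2 * d \<le> 1" using den by simp_all
    then show False by simp
  qed
  moreover have "of_int c * y^2 + of_int (d - a) * y + of_int (- b) = 0"
    using fixed by (simp add: algebra_simps power2_eq_square)
  ultimately show ?thesis using y unfolding quadratic_irrational_def by blast
qed

lemma quadratic_irrational_if_orbit:
  assumes ex: "is_OOCF_expansion x e" and q: "quadratic_irrational ((OOCF_T ^^ n) x)"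
  shows "quadratic_irrational x"
  using q
proof (induction n)
  case (Suc n)
  then show ?case using quadratic_irrational_if_mob OOCF_orbit_den_pos[OF ex, of n] OOCF_T_funpow_Suc[OF ex, of n]
    by (metis less_irrefl)
qed simp

lemma OOCF_periodic_orbit_point:
  assumes ex: "is_OOCF_expansion x e" and x: "x \<notin> \<rat>"
    and per: "p > 0" "\<And>n. n \<ge> N \<Longrightarrow> e (n + p) = e n"
  shows "(OOCF_T ^^ (j * p)) ((OOCF_T ^^ N) x) = (OOCF_T ^^ N) x"
proof -
  have "(OOCF_T ^^ (N + 0)) x = (OOCF_T ^^ (N + p + 0)) x"
  proof (rule mob_orbits_coincide[where d = "\<lambda>n. e (Suc (N + n))"])
    fix n
    have "e (Suc (N + p + n)) = e (Suc (N + n))" using per(2)[of "Suc (N + n)"] by (simp add: ac_simps)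
    then show "OOCF_digit (e (Suc (N + n)))" "(OOCF_T ^^ (N + n)) x \<in> OOCF_B (e (Suc (N + n)))"
      "(OOCF_T ^^ (N + p + n)) x \<in> OOCF_B (e (Suc (N + n)))"
      "(OOCF_T ^^ (N + Suc n)) x = mob (e (Suc (N + n))) ((OOCF_T ^^ (N + n)) x)"
      "(OOCF_T ^^ (N + p + Suc n)) x = mob (e (Suc (N + n))) ((OOCF_T ^^ (N + p + n)) x)"
      using is_OOCF_expansionD[OF ex] OOCF_T_funpow_Suc[OF ex] by (metis add_Suc_right)+
  next
    fix M
    obtain n where "n \<ge> N + M" "e (Suc n) \<noteq> (2,-1)"
      using OOCF_digits_not_eventually_2_neg[OF ex x] by blast
    then show "\<exists>n\<ge>M. e (Suc (N + n)) \<noteq> (2,-1)" by (intro exI[of _ "n - N"]) auto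
  qed
  moreover have "(OOCF_T ^^ (N + p + 0)) x = (OOCF_T ^^ p) ((OOCF_T ^^ N) x)"
    by (simp only: add_0_right add.commute[of N p] funpow_add o_apply)
  ultimately have "(OOCF_T ^^ p) ((OOCF_T ^^ N) x) = (OOCF_T ^^ N) x" by simp
  then have "((OOCF_T ^^ p) ^^ j) ((OOCF_T ^^ N) x) = (OOCF_T ^^ N) x" by (induction j) simp_all
  then show ?thesis by (simp add: funpow_mult mult.commute)
qed

lemma quadratic_irrational_if_periodic:
  assumes ex: "is_OOCF_expansion x e" and x: "x \<notin> \<rat>" and per: "eventually_periodic e"
  shows "quadratic_irrational x"
proof -
  obtain N p where p: "p > 0" "\<And>n. n \<ge> N \<Longrightarrow> e (n + p) = e n"
    using per unfolding eventually_periodic_def by blast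
  define u where "u n = (OOCF_T ^^ (N + n)) x" for n
  obtain i where i: "i \<ge> N" "e (Suc i) \<noteq> (2,-1)" using OOCF_digits_not_eventually_2_neg[OF ex x] by blast
  define L where "L = Suc i * p"
  have "Suc i * 1 \<le> L" unfolding L_def using p(1) by (intro mult_le_mono2) simp
  then have iL: "i - N < L" by simp
  have den: "0 < mob_den (e (Suc (N + n))) (u n)" for n using OOCF_orbit_den_pos[OF ex] by (simp add: u_def)
  have orbit: "u (Suc n) = mob (e (Suc (N + n))) (u n)" for n
    using OOCF_T_funpow_Suc[OF ex, of "N + n"] by (simp add: u_def)
  have "\<exists>a b c d :: int. u L * (of_int c * u 0 + of_int d) = of_int a * u 0 + of_int b
          \<and> of_int c * u 0 + of_int d = (\<Prod>n<L. mob_den (e (Suc (N + n))) (u n))"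
    by (rule mob_iterate_fraction) (use orbit less_imp_neq[OF den] in \<open>auto simp del: add_Suc_right\<close>)
  then obtain a b c d :: int where fr: "u L * (of_int c * u 0 + of_int d) = of_int a * u 0 + of_int b"
    "of_int c * u 0 + of_int d = (\<Prod>n<L. mob_den (e (Suc (N + n))) (u n))" by blast
  have "u L = (OOCF_T ^^ (Suc i * p)) ((OOCF_T ^^ N) x)"
    by (simp only: u_def L_def add.commute[of N] funpow_add o_apply)
  then have "u L = u 0" using OOCF_periodic_orbit_point[where N = N and j = "Suc i", OF ex x p] by (simp add: u_def)
  have den_le: "mob_den (e (Suc (N + n))) (u n) \<le> 1"
    "e (Suc (N + n)) \<noteq> (2,-1) \<Longrightarrow> mob_den (e (Suc (N + n))) (u n) \<le> 1/2" for n
    using mob_den_bounds[OF is_OOCF_expansionD[OF ex, of "N + n"]] by (simp_all add: u_def)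
  have "of_int c * u 0 + of_int d \<le> 1/2"
    unfolding fr(2) using iL i den_le(2)[of "i - N"] den den_le(1)
    by (intro prod_le_half[of _ "i - N"]) (auto simp: less_imp_le)
  moreover have "0 < of_int c * u 0 + of_int d" using fr(2) den by (simp add: prod_pos)
  ultimately have "quadratic_irrational (u 0)"
    using quadratic_irrational_if_fixed_by_fraction[of "u 0" c d a b] fr(1) \<open>u L = u 0\<close>
      OOCF_orbit_irrational[OF ex x] by (simp add: u_def)
  then show ?thesis using quadratic_irrational_if_orbit[OF ex] by (simp add: u_def)
qed

section \<open>Expansions of quadratic irrationals\<close>

definition quadratic_roots :: "int \<Rightarrow> int \<Rightarrow> int \<Rightarrow> real \<Rightarrow> real \<Rightarrow> bool" where
  "quadratic_roots A B C x s \<longleftrightarrow> A \<noteq> 0 \<and> of_int A * (x + s) = - of_int B \<and> of_int A * x * s = of_int C"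

lemma quadratic_irrational_has_conjugate:
  assumes "quadratic_irrational x"
  obtains A B C s where "quadratic_roots A B C x s"
proof -
  obtain A B C :: int where A: "A \<noteq> 0" and eq: "of_int A * x^2 + of_int B * x + of_int C = 0"
    using assms unfolding quadratic_irrational_def by blast
  define s where "s = - of_int B / of_int A - x"
  have "of_int A * (x + s) = - of_int B" using A by (simp add: s_def field_simps)
  moreover have "of_int A * x * s = - of_int B * x - of_int A * x^2"
    using A by (simp add: s_def field_simps power2_eq_square)
  then have "of_int A * x * s = of_int C" using eq by simp
  ultimately show ?thesis using A that unfolding quadratic_roots_def by blast
qed

lemma quadratic_roots_irrational:
  assumes r: "quadratic_roots A B C x s" and x: "x \<notin> \<rat>"
  shows "s \<notin> \<rat>" "s \<noteq> x"
proof -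
  have A: "real_of_int A \<noteq> 0" and e: "of_int A * (x + s) = - of_int B"
    using r unfolding quadratic_roots_def by auto
  then have "x = - of_int B / of_int A - s" by (simp add: field_simps)
  then show "s \<notin> \<rat>" using x by (metis Rats_diff Rats_divide Rats_minus_iff Rats_of_int)
  show "s \<noteq> x"
  proof
    assume "s = x"
    then have "x = - of_int B / (2 * of_int A)" using e A by (simp add: field_simps)
    then show False using x by simp
  qed
qed

lemma quadratic_roots_mobius:
  fixes al be ga de :: int
  assumes r: "quadratic_roots A B C x s" and det: "(al*de - be*ga)^2 = 1"
    and X: "of_int ga * x + of_int de \<noteq> 0" and Y: "of_int ga * s + of_int de \<noteq> 0"
  shows "\<exists>A' B' C'. quadratic_roots A' B' C' ((of_int al * x + of_int be) / (of_int ga * x + of_int de))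
                                              ((of_int al * s + of_int be) / (of_int ga * s + of_int de))
                   \<and> B'^2 - 4*A'*C' = B^2 - 4*A*C"
proof -
  define A' where "A' = A*de^2 - B*ga*de + C*ga^2"
  define B' where "B' = -2*A*de*be + (al*de+be*ga)*B - 2*al*ga*C"
  define C' where "C' = A*be^2 - B*al*be + C*al^2"
  have hB: "real_of_int B = - of_int A * (x + s)" and hC: "real_of_int C = of_int A * x * s"
    and A: "A \<noteq> 0" using r unfolding quadratic_roots_def by auto
  define X Y NX NY where "X = of_int ga * x + of_int de" "Y = of_int ga * s + of_int de"
    "NX = of_int al * x + of_int be" "NY = of_int al * s + of_int be"
  have "X \<noteq> 0" "Y \<noteq> 0" using X Y by (simp_all add: X_Y_NX_NY_def)
  have rA: "of_int A' = of_int A * X * Y"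
   and rB: "of_int B' = - of_int A * (NX * Y + NY * X)"
   and rC: "of_int C' = of_int A * NX * NY"
    unfolding A'_def B'_def C'_def X_Y_NX_NY_def by (simp_all add: hB hC algebra_simps power2_eq_square)
  have "of_int A' * (NX / X + NY / Y) = - of_int B'"
    unfolding rA rB using \<open>X \<noteq> 0\<close> \<open>Y \<noteq> 0\<close> by (simp add: field_simps)
  moreover have "of_int A' * (NX / X) * (NY / Y) = of_int C'"
    unfolding rA rC using \<open>X \<noteq> 0\<close> \<open>Y \<noteq> 0\<close> by (simp add: field_simps)
  moreover have "A' \<noteq> 0" using rA A \<open>X \<noteq> 0\<close> \<open>Y \<noteq> 0\<close> by (metis mult_eq_0_iff of_int_0_eq_iff)
  moreover have "B'^2 - 4*A'*C' = (al*de - be*ga)^2 * (B^2 - 4*A*C)"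
    unfolding A'_def B'_def C'_def by (simp add: algebra_simps power2_eq_square)
  ultimately show ?thesis using det unfolding quadratic_roots_def X_Y_NX_NY_def by auto
qed

lemma quadratic_roots_mob:
  assumes "quadratic_roots A B C x s" "mob_den d x \<noteq> 0" "mob_den d s \<noteq> 0"
  shows "\<exists>A' B' C'. quadratic_roots A' B' C' (mob d x) (mob d s) \<and> B'^2 - 4*A'*C' = B^2 - 4*A*C"
proof -
  have "(mob_a d * mob_d d - mob_b d * mob_c d)^2 = 1" using mob_det[of d] by (metis abs_power2 one_power2 power2_abs)
  then show ?thesis using quadratic_roots_mobius[OF assms(1)] assms(2,3) by (simp add: mob_def mob_den_def)
qed

lemma quadratic_roots_coeffs_le_discriminant:
  assumes r: "quadratic_roots A B C x s" and x: "x > 0" and s: "s < 0"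
  shows "\<bar>A\<bar> \<le> B^2 - 4*A*C" "\<bar>B\<bar> \<le> B^2 - 4*A*C" "\<bar>C\<bar> \<le> B^2 - 4*A*C"
proof -
  have A: "A \<noteq> 0" and hC: "of_int C = of_int A * x * s" using r unfolding quadratic_roots_def by auto
  have "of_int (A*C) = (of_int A)^2 * (x * s)" using hC by (simp add: power2_eq_square algebra_simps)
  also have "\<dots> < 0" using A x s by (simp add: mult_pos_neg)
  finally have AC: "A*C < 0" by (metis of_int_0 of_int_less_iff)
  then have "1 \<le> \<bar>A\<bar>" "1 \<le> \<bar>C\<bar>" by (auto simp: zero_less_mult_iff mult_less_0_iff)
  then have "\<bar>A\<bar> * 1 \<le> \<bar>A\<bar> * \<bar>C\<bar>" "1 * \<bar>C\<bar> \<le> \<bar>A\<bar> * \<bar>C\<bar>"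
    by (intro mult_left_mono mult_right_mono; simp)+
  moreover have "\<bar>A\<bar> * \<bar>C\<bar> = - (A*C)" using AC by (simp add: abs_mult[symmetric])
  moreover have "\<bar>B\<bar> \<le> B^2"
  proof (cases "B = 0")
    case False
    then have "\<bar>B\<bar> * 1 \<le> \<bar>B\<bar> * \<bar>B\<bar>" by (intro mult_left_mono) auto
    then show ?thesis by (simp add: power2_eq_square abs_mult_self_eq)
  qed simp
  ultimately show "\<bar>A\<bar> \<le> B^2 - 4*A*C" "\<bar>B\<bar> \<le> B^2 - 4*A*C" "\<bar>C\<bar> \<le> B^2 - 4*A*C"
    using AC by (simp_all add: power2_eq_square)
qed

lemma quadratic_roots_positive_root_unique:
  assumes r: "quadratic_roots A B C u s" "quadratic_roots A B C u' s'"
    and pos: "u > 0" "u' > 0" and neg: "s < 0" "s' < 0"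
  shows "u = u'"
proof -
  have A: "real_of_int A \<noteq> 0" using r(1) unfolding quadratic_roots_def by simp
  have hB: "of_int B = - of_int A * (u + s)" and hC: "of_int C = of_int A * u * s"
    and hB': "of_int B = - of_int A * (u' + s')" and hC': "of_int C = of_int A * u' * s'"
    using r unfolding quadratic_roots_def by simp_all
  have "of_int A * (u' - u) * (u' - s) = of_int A * u'^2 + of_int B * u' + of_int C"
    unfolding hB hC by (simp add: algebra_simps power2_eq_square)
  also have "\<dots> = 0"
    unfolding hB' hC' by (simp add: algebra_simps power2_eq_square)
  finally show ?thesis using A pos neg by simp
qed

primrec mob_orbit :: "(nat \<Rightarrow> int \<times> int) \<Rightarrow> real \<Rightarrow> nat \<Rightarrow> real" where
  "mob_orbit d s 0 = s"
| "mob_orbit d s (Suc n) = mob (d n) (mob_orbit d s n)"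

lemma conjugate_orbit_roots:
  assumes ex: "is_OOCF_expansion x e" and r: "quadratic_roots A B C x s" and x: "x \<notin> \<rat>"
  shows "\<exists>A' B' C'. quadratic_roots A' B' C' ((OOCF_T ^^ n) x) (mob_orbit (\<lambda>i. e (Suc i)) s n)
                   \<and> B'^2 - 4*A'*C' = B^2 - 4*A*C"
proof (induction n)
  case 0
  then show ?case using r by auto
next
  case (Suc n)
  then obtain A' B' C' where r': "quadratic_roots A' B' C' ((OOCF_T ^^ n) x) (mob_orbit (\<lambda>i. e (Suc i)) s n)"
    "B'^2 - 4*A'*C' = B^2 - 4*A*C" by blast
  have "mob_den (e (Suc n)) (mob_orbit (\<lambda>i. e (Suc i)) s n) \<noteq> 0"
    using mob_den_eq_0_imp_Rats is_OOCF_expansionD(1)[OF ex]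
      quadratic_roots_irrational(1)[OF r'(1) OOCF_orbit_irrational[OF ex x]] by blast
  then show ?case
    using quadratic_roots_mob[OF r'(1)] less_imp_neq[OF OOCF_orbit_den_pos[OF ex, of n]] r'(2)
      OOCF_T_funpow_Suc[OF ex, of n] by fastforce
qed

lemma conjugate_orbit_irrational:
  assumes ex: "is_OOCF_expansion x e" and r: "quadratic_roots A B C x s" and x: "x \<notin> \<rat>"
  shows "mob_orbit (\<lambda>i. e (Suc i)) s n \<notin> \<rat>"
  using conjugate_orbit_roots[OF assms, of n] quadratic_roots_irrational(1) OOCF_orbit_irrational[OF ex x]
  by blast

lemma conjugate_orbit_leaves_cylinders:
  assumes ex: "is_OOCF_expansion x e" and r: "quadratic_roots A B C x s" and x: "x \<notin> \<rat>"
  obtains n where "mob_orbit (\<lambda>i. e (Suc i)) s n \<notin> OOCF_B (e (Suc n))"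
proof (rule ccontr)
  define ss where "ss = mob_orbit (\<lambda>i. e (Suc i)) s"
  assume "\<not> thesis"
  then have ssB: "ss n \<in> OOCF_B (e (Suc n))" for n using that ss_def by blast
  have "(\<lambda>n. (OOCF_T ^^ n) x) 0 = ss 0"
  proof (rule mob_orbits_coincide[where d = "\<lambda>n. e (Suc n)"])
    fix n
    show "OOCF_digit (e (Suc n))" "(OOCF_T ^^ n) x \<in> OOCF_B (e (Suc n))"
      by (rule is_OOCF_expansionD[OF ex])+
    show "ss n \<in> OOCF_B (e (Suc n))" by (rule ssB)
    show "(OOCF_T ^^ Suc n) x = mob (e (Suc n)) ((OOCF_T ^^ n) x)" by (rule OOCF_T_funpow_Suc[OF ex])
    show "ss (Suc n) = mob (e (Suc n)) (ss n)" by (simp add: ss_def)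
  next
    show "\<exists>n\<ge>M. e (Suc n) \<noteq> (2,-1)" for M by (rule OOCF_digits_not_eventually_2_neg[OF ex x])
  qed
  then show False using quadratic_roots_irrational(2)[OF r x] by (simp add: ss_def)
qed

lemma conjugate_orbit_eventually_neg:
  assumes ex: "is_OOCF_expansion x e" and r: "quadratic_roots A B C x s" and x: "x \<notin> \<rat>"
  obtains n0 where "\<And>n. n \<ge> n0 \<Longrightarrow> mob_orbit (\<lambda>i. e (Suc i)) s n < 0"
proof -
  define ss where "ss = mob_orbit (\<lambda>i. e (Suc i)) s"
  note digit = is_OOCF_expansionD(1)[OF ex]
  obtain n where n: "ss n \<notin> OOCF_B (e (Suc n))"
    using conjugate_orbit_leaves_cylinders[OF assms] ss_def by blast
  have "mob_den (e (Suc n)) (ss n) \<noteq> 0"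
    using mob_den_eq_0_imp_Rats[OF digit] conjugate_orbit_irrational[OF assms] ss_def by blast
  then have first: "ss (Suc n) \<notin> {0..1}" using OOCF_B_if_mob_in_unit[OF digit] n by (auto simp: ss_def)
  have outside: "ss m \<notin> {0..1}" if "m \<ge> Suc n" for m
    using that
  proof (induction m rule: dec_induct)
    case base
    then show ?case by (rule first)
  next
    case (step m)
    then show ?case using mob_neg_outside_unit[OF digit[of m], of "ss m"] by (auto simp: ss_def)
  qed
  have "ss (Suc m) < 0" if "m \<ge> Suc n" for m
    using mob_neg_outside_unit[OF digit[of m], of "ss m"] outside[OF that] by (auto simp: ss_def)
  then have "ss m < 0" if "m \<ge> Suc (Suc n)" for m
    using that by (cases m) auto
  then show ?thesis using that ss_def by blast
qed

lemma OOCF_orbit_repeats: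
  assumes ex: "is_OOCF_expansion x e" and qi: "quadratic_irrational x"
  obtains n m where "n < m" "(OOCF_T ^^ n) x = (OOCF_T ^^ m) x"
proof -
  have x: "x \<notin> \<rat>" using qi unfolding quadratic_irrational_def by blast
  obtain A B C s where r: "quadratic_roots A B C x s" using quadratic_irrational_has_conjugate[OF qi] .
  define ss where "ss = mob_orbit (\<lambda>i. e (Suc i)) s"
  define \<Delta> where "\<Delta> = B^2 - 4*A*C"
  define box where "box = {-\<Delta>..\<Delta>} \<times> {-\<Delta>..\<Delta>} \<times> {-\<Delta>..\<Delta>}"
  define R where "R n t = (case t of (A', B', C') \<Rightarrow> quadratic_roots A' B' C' ((OOCF_T ^^ n) x) (ss n))"
    for n t
  obtain n0 where neg: "\<And>n. n \<ge> n0 \<Longrightarrow> ss n < 0"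
    using conjugate_orbit_eventually_neg[OF ex r x] ss_def by blast
  have pos: "(OOCF_T ^^ n) x > 0" for n using OOCF_orbit_pos[OF ex x] .
  have "\<exists>t\<in>box. R n t" if "n \<in> {n0..}" for n
  proof -
    obtain A' B' C' where r': "quadratic_roots A' B' C' ((OOCF_T ^^ n) x) (ss n)" "B'^2 - 4*A'*C' = \<Delta>"
      using conjugate_orbit_roots[OF ex r x, of n] by (auto simp: ss_def \<Delta>_def)
    have "ss n < 0" using neg that by simp
    then have "(A', B', C') \<in> box"
      using quadratic_roots_coeffs_le_discriminant[OF r'(1) pos] r'(2) unfolding box_def by auto
    then show ?thesis using r'(1) unfolding R_def by blast
  qed
  moreover have "finite box" by (simp add: box_def)
  ultimately obtain t where inf: "infinite {n \<in> {n0..}. R n t}"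
    using pigeonhole_infinite_rel[of "{n0..}" box R] infinite_Ici[of n0] by blast
  obtain n where n: "n \<in> {n \<in> {n0..}. R n t}" using infinite_imp_nonempty[OF inf] by blast
  obtain m where m: "m \<in> {n \<in> {n0..}. R n t}" "\<not> m < Suc n"
    using inf unfolding finite_nat_set_iff_bounded by blast
  obtain A' B' C' where t: "t = (A', B', C')" by (cases t)
  have "(OOCF_T ^^ n) x = (OOCF_T ^^ m) x"
  proof (rule quadratic_roots_positive_root_unique)
    show "quadratic_roots A' B' C' ((OOCF_T ^^ n) x) (ss n)" "quadratic_roots A' B' C' ((OOCF_T ^^ m) x) (ss m)"
      using n m(1) t unfolding R_def by simp_all
    show "ss n < 0" "ss m < 0" using n m(1) neg by simp_all
  qed (rule pos)+
  moreover have "n < m" using m(2) by simp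
  ultimately show ?thesis using that by blast
qed

lemma eventually_periodic_if_orbit_repeats:
  assumes ex: "is_OOCF_expansion x e" and x: "x \<notin> \<rat>"
    and nm: "n < m" "(OOCF_T ^^ n) x = (OOCF_T ^^ m) x"
  shows "eventually_periodic e"
proof -
  have "(OOCF_T ^^ (n + j)) x = (OOCF_T ^^ (m + j)) x" for j
    using nm(2) by (simp add: funpow_add add.commute[of _ j])
  then have "e (Suc (n + j)) = e (Suc (m + j))" for j
    using OOCF_digit_unique[OF is_OOCF_expansionD(1)[OF ex] is_OOCF_expansionD(1)[OF ex]
        is_OOCF_expansionD(2)[OF ex] _ OOCF_orbit_irrational[OF ex x]]
      is_OOCF_expansionD(2)[OF ex, of "m + j"] by metis
  moreover have "k = Suc (n + (k - Suc n))" "k + (m - n) = Suc (m + (k - Suc n))" if "k \<ge> Suc n" for k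
    using that nm(1) by simp_all
  ultimately have "e (k + (m - n)) = e k" if "k \<ge> Suc n" for k
    using that by (metis (no_types))
  then show ?thesis using nm(1) unfolding eventually_periodic_def by (metis zero_less_diff)
qed

lemma eventually_periodic_if_quadratic_irrational:
  assumes "is_OOCF_expansion x e" "quadratic_irrational x"
  shows "eventually_periodic e"
proof -
  obtain n m where "n < m" "(OOCF_T ^^ n) x = (OOCF_T ^^ m) x" using OOCF_orbit_repeats[OF assms] .
  moreover have "x \<notin> \<rat>" using assms(2) unfolding quadratic_irrational_def by blast
  ultimately show ?thesis using eventually_periodic_if_orbit_repeats[OF assms(1)] by blast
qed

theorem theorem1p2:
  shows "(\<forall>x e. x \<in> {0..1} \<and> is_OOCF_expansion x e \<and> eventually_periodic e
            \<longrightarrow> inf_rational x \<or> quadratic_irrational x)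
       \<and> (\<forall>x e. x \<in> {0<..<1} \<and> quadratic_irrational x \<and> is_OOCF_expansion x e
            \<longrightarrow> eventually_periodic e)"
  using inf_rational_if_expansion quadratic_irrational_if_periodic
    eventually_periodic_if_quadratic_irrational by blast

end
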